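(* Let $\mu$ be a nontrivial positive finite measure on $\partial\mathbb{D}$, let $n\ge1$, $1\le k\le n$, and let $z_1,\dots,z_k$ be zeros of $\Phi_n(z;\mu)$, repeated at most according to multiplicity (so $\prod_{j=1}^k(z-z_j)$ divides $\Phi_n(z;\mu)$). Then \[ \Phi_n(z;\mu)=\prod_{j=1}^k(z-z_j)\;\Phi_{n-k}\Bigl(z;\prod_{j=1}^k|z-z_j|^2\,d\mu\Bigr). \]
   Context: A measure on $\partial\mathbb{D}$ is nontrivial if its support is infinite. For a positive finite measure $\nu$ on $\partial\mathbb{D}$ with infinite support, $\Phi_n(z;\nu)$ is the unique monic polynomial of degree $n$ orthogonal in $L^2(\nu)$ to all polynomials of degree less than $n$; $\Phi_0=1$. In the formula, $\prod_{j}|z-z_j|^2d\mu$ denotes the measure with density $\prod_j|z-z_j|^2$ with respect to $\mu$. *)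

theory Defs
  imports "HOL-Analysis.Analysis" "HOL-Computational_Algebra.Polynomial"
begin

definition circle_measure :: "complex measure \<Rightarrow> bool" where
  "circle_measure \<nu> \<longleftrightarrow> sets \<nu> = sets borel \<and> finite_measure \<nu> \<and>
     emeasure \<nu> (UNIV - sphere 0 1) = 0"

definition measure_support :: "complex measure \<Rightarrow> complex set" where
  "measure_support \<nu> = {z. \<forall>e>0. emeasure \<nu> (ball z e) > 0}"

definition monic_OP :: "complex measure \<Rightarrow> nat \<Rightarrow> complex poly" where
  "monic_OP \<nu> n = (THE p. degree p = n \<and> lead_coeff p = 1 \<and>
     (\<forall>q::complex poly. degree q < n \<longrightarrow>
        (LINT z|\<nu>. poly p z * cnj (poly q z)) = 0))"

end

theory Submission
  imports Defs
begin

text \<open>Write \<open>\<Phi> = monic_OP \<mu> n = P Q\<close> with \<open>P = \<Prod>j<k. (z - z\<^sub>j)\<close>. Since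
  \<open>\<integral> f \<bar>P\<bar>\<^sup>2 d\<mu> = \<integral> f d\<nu>\<close> for \<open>\<nu> = \<bar>P\<bar>\<^sup>2 d\<mu>\<close>, the \<open>L\<^sup>2(\<nu>)\<close> inner product of \<open>p\<close> and \<open>q\<close>
  is the \<open>L\<^sup>2(\<mu>)\<close> inner product of \<open>P p\<close> and \<open>P q\<close>. If \<open>deg q < n - k\<close> then
  \<open>deg (P q) < n\<close>, so \<open>Q\<close> is \<open>\<nu>\<close>-orthogonal to all polynomials of lower degree; being monic
  of degree \<open>n - k\<close>, it is the monic orthogonal polynomial of \<open>\<nu>\<close> because that inner
  product is still positive definite on polynomials.\<close>

definition poly_inner :: "complex measure \<Rightarrow> complex poly \<Rightarrow> complex poly \<Rightarrow> complex" where
  "poly_inner M p q = (LINT z|M. poly p z * cnj (poly q z))"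

lemma circle_measure_sets: "circle_measure M \<Longrightarrow> sets M = sets borel"
  by (simp add: circle_measure_def)

lemma circle_measure_AE_sphere:
  assumes "circle_measure M"
  shows "AE z in M. z \<in> sphere 0 1"
proof (rule AE_I')
  show "UNIV - sphere 0 1 \<in> null_sets M"
    using assms by (auto simp: circle_measure_def null_sets_def)
qed auto

lemma borel_measurable_circle_measure_continuous:
  fixes f :: "complex \<Rightarrow> 'b::topological_space"
  assumes "circle_measure M" and "continuous_on UNIV f"
  shows "f \<in> borel_measurable M"
  using borel_measurable_continuous_onI[OF assms(2)]
  by (simp add: measurable_cong_sets[OF circle_measure_sets[OF assms(1)] refl])

lemma integrable_circle_measure_continuous:
  fixes f :: "complex \<Rightarrow> complex"
  assumes M: "circle_measure M" and f: "continuous_on UNIV f"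
  shows "integrable M f"
proof -
  have "bounded (f ` sphere 0 1)"
    using f by (intro compact_imp_bounded compact_continuous_image)
      (auto intro: continuous_on_subset)
  then obtain B where "\<And>z. z \<in> sphere 0 1 \<Longrightarrow> norm (f z) \<le> B"
    unfolding bounded_iff by blast
  then have "AE z in M. norm (f z) \<le> B"
    using circle_measure_AE_sphere[OF M] by (auto elim: eventually_mono)
  moreover have "finite_measure M"
    using M by (simp add: circle_measure_def)
  ultimately show ?thesis
    using finite_measure.integrable_const_bound borel_measurable_circle_measure_continuous[OF M f]
    by blast
qed

lemma integrable_poly_mult_cnj:
  "circle_measure M \<Longrightarrow> integrable M (\<lambda>z. poly p z * cnj (poly q z))"
  by (intro integrable_circle_measure_continuous continuous_intros)

lemma poly_inner_add_left:
  "circle_measure M \<Longrightarrow> poly_inner M (p + q) r = poly_inner M p r + poly_inner M q r"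
  unfolding poly_inner_def by (simp add: distrib_right integrable_poly_mult_cnj)

lemma poly_inner_diff_left:
  "circle_measure M \<Longrightarrow> poly_inner M (p - q) r = poly_inner M p r - poly_inner M q r"
  unfolding poly_inner_def by (simp add: left_diff_distrib integrable_poly_mult_cnj)

lemma poly_inner_smult_left: "poly_inner M (smult c p) r = c * poly_inner M p r"
  unfolding poly_inner_def by (simp add: mult.assoc)

lemma poly_inner_sum_left:
  "circle_measure M \<Longrightarrow> poly_inner M (\<Sum>j\<in>A. f j) r = (\<Sum>j\<in>A. poly_inner M (f j) r)"
  by (induction A rule: infinite_finite_induct) (auto simp: poly_inner_add_left poly_inner_def[of M 0])

lemma cnj_poly_inner: "cnj (poly_inner M p q) = poly_inner M q p"
  unfolding poly_inner_def Bochner_Integration.integral_cnj[symmetric] by (simp add: mult.commute)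

lemma measure_support_subset_closed:
  assumes "sets M = sets borel" and "closed S" and "AE z in M. z \<in> S"
  shows "measure_support M \<subseteq> S"
proof
  fix z assume z: "z \<in> measure_support M"
  show "z \<in> S"
  proof (rule ccontr)
    assume "z \<notin> S"
    then obtain e where "e > 0" and e: "ball z e \<subseteq> - S"
      using assms(2) open_contains_ball by blast
    from assms(3) obtain N where N: "{x \<in> space M. x \<notin> S} \<subseteq> N" "emeasure M N = 0" "N \<in> sets M"
      by (rule AE_E)
    have "ball z e \<subseteq> N"
      using e N(1) sets_eq_imp_space_eq[OF assms(1)] by auto
    then have "emeasure M (ball z e) \<le> emeasure M N"
      using N(3) by (rule emeasure_mono)
    then have "emeasure M (ball z e) = 0"
      using N(2) by simp
    then show False
      using z \<open>e > 0\<close> unfolding measure_support_def by force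
  qed
qed

text \<open>A polynomial vanishing \<open>\<mu>\<close>-a.e. vanishes on the support of \<open>\<mu>\<close>, which is infinite.\<close>
lemma poly_inner_self_eq_0_iff:
  assumes M: "circle_measure M" and inf: "infinite (measure_support M)"
  shows "poly_inner M p p = 0 \<longleftrightarrow> p = 0"
proof
  assume "poly_inner M p p = 0"
  have sq: "poly p z * cnj (poly p z) = of_real ((cmod (poly p z))\<^sup>2)" for z
    by (rule complex_norm_square[symmetric])
  have "integrable M (\<lambda>z. (cmod (poly p z))\<^sup>2)"
    using integrable_poly_mult_cnj[OF M, of p p] unfolding sq complex_of_real_integrable_eq .
  moreover have "(LINT z|M. (cmod (poly p z))\<^sup>2) = 0"
    using \<open>poly_inner M p p = 0\<close> unfolding poly_inner_def sq integral_complex_of_real by simp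
  ultimately have "AE z in M. z \<in> {z. poly p z = 0}"
    by (simp add: integral_nonneg_eq_0_iff_AE)
  then have "measure_support M \<subseteq> {z. poly p z = 0}"
    by (intro measure_support_subset_closed circle_measure_sets[OF M] closed_Collect_eq
        continuous_intros)
  then show "p = 0"
    using inf poly_roots_finite finite_subset by blast
qed (simp add: poly_inner_def)

text \<open>Uniqueness of the monic orthogonal polynomial only needs the inner product to be
  additive in its first argument and definite; this is what makes it applicable to the
  weighted measure in the main theorem without showing that it is again a circle measure.\<close>
lemma monic_OP_eqI:
  assumes diff: "\<And>p q r. poly_inner M (p - q) r = poly_inner M p r - poly_inner M q r"
    and definite: "\<And>r. poly_inner M r r = 0 \<Longrightarrow> r = 0"
    and p: "degree p = n" "lead_coeff p = 1" "\<And>q. degree q < n \<Longrightarrow> poly_inner M p q = 0"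
  shows "monic_OP M n = p"
  unfolding monic_OP_def
proof (rule the_equality)
  show "degree p = n \<and> lead_coeff p = 1 \<and>
      (\<forall>q. degree q < n \<longrightarrow> (LINT z|M. poly p z * cnj (poly q z)) = 0)"
    using p by (simp add: poly_inner_def)
next
  fix p' assume "degree p' = n \<and> lead_coeff p' = 1 \<and>
      (\<forall>q. degree q < n \<longrightarrow> (LINT z|M. poly p' z * cnj (poly q z)) = 0)"
  then have p': "degree p' = n" "lead_coeff p' = 1" "\<And>q. degree q < n \<Longrightarrow> poly_inner M p' q = 0"
    unfolding poly_inner_def by blast+
  show "p' = p"
  proof (rule ccontr)
    assume "p' \<noteq> p"
    have "degree (p' - p) \<le> n"
      using degree_diff_le[of p' n p] p p' by simp
    moreover have "coeff (p' - p) n = 0"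
      using p p' by simp
    moreover have "p' - p \<noteq> 0"
      using \<open>p' \<noteq> p\<close> by simp
    ultimately have "degree (p' - p) < n"
      by (metis le_neq_implies_less leading_coeff_0_iff)
    then have "poly_inner M (p' - p) (p' - p) = 0"
      by (simp add: diff p p')
    then show False
      using definite[of "p' - p"] \<open>p' \<noteq> p\<close> by simp
  qed
qed

lemma poly_eq_sum_monic_basis:
  fixes f :: "nat \<Rightarrow> 'a::comm_ring_1 poly"
  assumes f: "\<And>j. j < n \<Longrightarrow> degree (f j) = j \<and> lead_coeff (f j) = 1"
    and q: "\<And>i. n \<le> i \<Longrightarrow> coeff q i = 0"
  shows "\<exists>c. q = (\<Sum>j<n. smult (c j) (f j))"
  using assms
proof (induction n arbitrary: q)
  case 0
  then show ?case by (simp add: poly_eq_iff)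
next
  case (Suc n)
  define r where "r = q - smult (coeff q n) (f n)"
  have fn: "degree (f n) = n" "coeff (f n) n = 1"
    using Suc.prems(1)[of n] by auto
  have coeff_r: "coeff r i = 0" if "n \<le> i" for i
  proof (cases "i = n")
    case True
    then show ?thesis using fn by (simp add: r_def)
  next
    case False
    then show ?thesis using that fn Suc.prems(2)[of i] by (simp add: r_def coeff_eq_0)
  qed
  have "\<exists>c. r = (\<Sum>j<n. smult (c j) (f j))"
    by (rule Suc.IH[OF _ coeff_r]) (metis Suc.prems(1) less_SucI)
  then obtain c where "r = (\<Sum>j<n. smult (c j) (f j))" ..
  moreover have "(\<Sum>j<n. smult ((c(n := coeff q n)) j) (f j)) = (\<Sum>j<n. smult (c j) (f j))"
    by (intro sum.cong) auto
  ultimately have "q = (\<Sum>j<Suc n. smult ((c(n := coeff q n)) j) (f j))"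
    by (simp add: r_def diff_eq_eq)
  then show ?case
    by blast
qed

lemma poly_inner_eq_0_if_orthogonal_basis:
  assumes M: "circle_measure M"
    and f: "\<And>j. j < n \<Longrightarrow> degree (f j) = j \<and> lead_coeff (f j) = 1"
    and orth: "\<And>j. j < n \<Longrightarrow> poly_inner M p (f j) = 0"
    and "degree q < n"
  shows "poly_inner M p q = 0"
proof -
  have "coeff q i = 0" if "n \<le> i" for i
    using \<open>degree q < n\<close> that by (simp add: coeff_eq_0)
  then obtain c where q: "q = (\<Sum>j<n. smult (c j) (f j))"
    using poly_eq_sum_monic_basis[OF f] by blast
  have "poly_inner M q p = (\<Sum>j<n. c j * cnj (poly_inner M p (f j)))"
    unfolding q by (simp add: poly_inner_sum_left[OF M] poly_inner_smult_left cnj_poly_inner)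
  also have "\<dots> = 0"
    using orth by simp
  finally show ?thesis
    by (metis cnj_poly_inner complex_cnj_zero)
qed

text \<open>The Gram--Schmidt step: subtract from \<open>z\<^sup>n\<close> its projections onto \<open>f 0, \<dots>, f (n - 1)\<close>.\<close>
lemma monic_orthogonal_poly_extend:
  assumes M: "circle_measure M" and inf: "infinite (measure_support M)"
    and f: "\<And>j. j < n \<Longrightarrow> degree (f j) = j \<and> lead_coeff (f j) = 1 \<and>
      (\<forall>q. degree q < j \<longrightarrow> poly_inner M (f j) q = 0)"
  shows "\<exists>p. degree p = n \<and> lead_coeff p = 1 \<and> (\<forall>q. degree q < n \<longrightarrow> poly_inner M p q = 0)"
proof -
  have orth: "poly_inner M (f j) (f i) = 0" if "i < n" "j < n" "i \<noteq> j" for i j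
  proof (cases "i < j")
    case True
    then show ?thesis using f[OF that(1)] f[OF that(2)] by auto
  next
    case False
    then have "poly_inner M (f i) (f j) = 0" using f[OF that(1)] f[OF that(2)] that by auto
    then show ?thesis by (metis cnj_poly_inner complex_cnj_zero)
  qed
  define c where "c j = poly_inner M (monom 1 n) (f j) / poly_inner M (f j) (f j)" for j
  define p where "p = monom 1 n - (\<Sum>j<n. smult (c j) (f j))"
  have coeff_p: "coeff p i = (if i = n then 1 else 0)" if "n \<le> i" for i
    using f that by (auto simp: p_def coeff_sum coeff_monom intro!: sum.neutral coeff_eq_0)
  then have "degree p = n"
    by (intro antisym degree_le le_degree) auto
  with coeff_p have p: "degree p = n" "lead_coeff p = 1"
    by simp_all
  have p_orth_f: "poly_inner M p (f i) = 0" if "i < n" for i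
  proof -
    have "poly_inner M p (f i) =
        poly_inner M (monom 1 n) (f i) - (\<Sum>j<n. c j * poly_inner M (f j) (f i))"
      unfolding p_def poly_inner_diff_left[OF M] poly_inner_sum_left[OF M] poly_inner_smult_left ..
    also have "(\<Sum>j<n. c j * poly_inner M (f j) (f i)) = (\<Sum>j\<in>{i}. c j * poly_inner M (f j) (f i))"
      using that orth by (intro sum.mono_neutral_right) auto
    also have "\<dots> = poly_inner M (monom 1 n) (f i)"
      using f[OF that] poly_inner_self_eq_0_iff[OF M inf, of "f i"] by (auto simp: c_def)
    finally show ?thesis
      by simp
  qed
  have f_basis: "degree (f j) = j \<and> lead_coeff (f j) = 1" if "j < n" for j
    using f[OF that] by blast
  have "poly_inner M p q = 0" if "degree q < n" for q
    using poly_inner_eq_0_if_orthogonal_basis[OF M f_basis p_orth_f that] .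
  with p show ?thesis
    by blast
qed

lemma monic_OP_spec:
  assumes M: "circle_measure M" and inf: "infinite (measure_support M)"
  shows "degree (monic_OP M n) = n \<and> lead_coeff (monic_OP M n) = 1 \<and>
    (\<forall>q. degree q < n \<longrightarrow> poly_inner M (monic_OP M n) q = 0)"
proof (induction n rule: less_induct)
  case (less n)
  obtain p where p: "degree p = n" "lead_coeff p = 1" "\<forall>q. degree q < n \<longrightarrow> poly_inner M p q = 0"
    using monic_orthogonal_poly_extend[OF M inf less.IH] by blast
  then have "monic_OP M n = p"
    by (intro monic_OP_eqI poly_inner_diff_left[OF M]) (simp_all add: poly_inner_self_eq_0_iff[OF M inf])
  with p show ?case
    by simp
qed

lemma poly_inner_density_poly_weight:
  assumes M: "circle_measure M"
  shows "poly_inner (density M (\<lambda>z. ennreal ((cmod (poly P z))\<^sup>2))) p q =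
    poly_inner M (P * p) (P * q)"
proof -
  have "(cmod (poly P z))\<^sup>2 *\<^sub>R (poly p z * cnj (poly q z)) =
      poly (P * p) z * cnj (poly (P * q) z)" for z
    unfolding scaleR_conv_of_real complex_norm_square by (simp add: mult_ac)
  then show ?thesis
    unfolding poly_inner_def
    by (subst integral_density)
      (auto intro!: borel_measurable_circle_measure_continuous[OF M] continuous_intros)
qed

lemma monic_OP_divisor_factorization:
  assumes M: "circle_measure \<mu>" and inf: "infinite (measure_support \<mu>)"
    and P: "degree P = k" "lead_coeff P = 1" and "P dvd monic_OP \<mu> n"
  shows "monic_OP \<mu> n = P * monic_OP (density \<mu> (\<lambda>z. ennreal ((cmod (poly P z))\<^sup>2))) (n - k)"
proof -
  define \<nu> where "\<nu> = density \<mu> (\<lambda>z. ennreal ((cmod (poly P z))\<^sup>2))"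
  have \<nu>: "poly_inner \<nu> p q = poly_inner \<mu> (P * p) (P * q)" for p q
    unfolding \<nu>_def by (rule poly_inner_density_poly_weight[OF M])
  obtain Q where Q: "monic_OP \<mu> n = P * Q"
    using \<open>P dvd monic_OP \<mu> n\<close> by blast
  have \<Phi>: "degree (monic_OP \<mu> n) = n" "lead_coeff (monic_OP \<mu> n) = 1"
    "\<And>q. degree q < n \<Longrightarrow> poly_inner \<mu> (monic_OP \<mu> n) q = 0"
    using monic_OP_spec[OF M inf, of n] by blast+
  have "P \<noteq> 0" "Q \<noteq> 0"
    using P \<Phi> Q by auto
  then have deg_Q: "k + degree Q = n"
    using \<Phi> P Q by (simp add: degree_mult_eq)
  then have "degree Q = n - k"
    by simp
  moreover have "lead_coeff Q = 1"
    using \<Phi>(2) P(2) by (metis Q lead_coeff_mult mult_1)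
  moreover have "poly_inner \<nu> Q q = 0" if "degree q < n - k" for q
    using \<Phi>(3) degree_mult_le[of P q] P that deg_Q by (simp add: \<nu> Q[symmetric])
  ultimately have "monic_OP \<nu> (n - k) = Q"
    using \<open>P \<noteq> 0\<close> by (intro monic_OP_eqI)
      (simp_all add: \<nu> right_diff_distrib poly_inner_diff_left[OF M] poly_inner_self_eq_0_iff[OF M inf])
  then show ?thesis
    using Q by (simp add: \<nu>_def)
qed

theorem theorem3:
  fixes \<mu> :: "complex measure" and n k :: nat and zs :: "nat \<Rightarrow> complex"
  assumes "circle_measure \<mu>"
    and "infinite (measure_support \<mu>)"
    and "1 \<le> n" and "1 \<le> k" and "k \<le> n"
    and "(\<Prod>j<k. [:- zs j, 1:]) dvd monic_OP \<mu> n"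
  shows "monic_OP \<mu> n =
    (\<Prod>j<k. [:- zs j, 1:]) *
      monic_OP (density \<mu> (\<lambda>z. ennreal (\<Prod>j<k. (cmod (z - zs j))\<^sup>2))) (n - k)"
proof -
  let ?P = "\<Prod>j<k. [:- zs j, 1:]"
  have "(\<Prod>j<k. (cmod (z - zs j))\<^sup>2) = (cmod (poly ?P z))\<^sup>2" for z
    by (simp add: poly_prod prod_norm prod_power_distrib[symmetric])
  moreover have "degree ?P = k"
    by (simp add: degree_prod_sum_eq)
  moreover have "lead_coeff ?P = 1"
    unfolding lead_coeff_prod by simp
  ultimately show ?thesis
    using monic_OP_divisor_factorization[OF assms(1,2) _ _ assms(6)] by simp
qed

end
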